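(* Let $C\in O_A^+(\mathbb{Z})$, $c_1,c_2\in\overline C_Q$ and $(z,\tau)\in D(c_1)\cap D(c_2)$. Then $C\cdot C_Q=C_Q$, $C\cdot S_Q=S_Q$, $(Cz,\tau)\in D(Cc_1)\cap D(Cc_2)$, and $$\theta^{Cc_1,Cc_2}(Cz;\tau)=\theta^{c_1,c_2}(z;\tau).$$
   Context: $A$ is a nondegenerate symmetric $r\times r$ integer matrix, $Q(x)=\frac12\langle x,Ax\rangle$, $B(x,y)=\langle x,Ay\rangle$, $Q$ of type $(r-1,1)$. Fix $c_0$ with $Q(c_0)<0$; $C_Q=\{c\in\mathbb{R}^r:Q(c)<0,B(c,c_0)<0\}$, $S_Q=\{c\in\mathbb{Z}^r\text{ primitive}:Q(c)=0,B(c,c_0)<0\}$, $\overline C_Q=C_Q\cup S_Q$. $O_A^+(\mathbb{R})=\{C\in\mathrm{GL}_r(\mathbb{R}):C^tAC=A,\ B(Cc,c)<0\ \forall c\in C_Q\}$, $O_A^+(\mathbb{Z})=O_A^+(\mathbb{R})\cap\mathrm{GL}_r(\mathbb{Z})$. $R(c)=\mathbb{R}^r$ for $c\in C_Q$, $R(c)=\{a:B(c,a)\notin\mathbb{Z}\}$ for $c\in S_Q$; $D(c)=\{(z,\tau)\in\mathbb{C}^r\times\mathbb{H}:\operatorname{Im}z/\operatorname{Im}\tau\in R(c)\}$. With $y=\operatorname{Im}\tau$, $E(z)=2\int_0^ze^{-\pi t^2}dt$: $\rho^c(\nu;\tau)=E(\frac{B(c,\nu)}{\sqrt{-Q(c)}}y^{1/2})$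 for $c\in C_Q$, $\operatorname{sign}(B(c,\nu))$ for $c\in S_Q$; $\rho^{c_1,c_2}=\rho^{c_1}-\rho^{c_2}$; $\theta^{c_1,c_2}(z;\tau)=\sum_{n\in\mathbb{Z}^r}\rho^{c_1,c_2}(n+a;\tau)e^{2\pi iQ(n)\tau+2\pi iB(n,z)}$ with $a=\operatorname{Im}z/\operatorname{Im}\tau$. *)

theory Defs
  imports "HOL-Analysis.Analysis"
begin

definition QF :: "real^'n^'n \<Rightarrow> real^'n \<Rightarrow> real" where
  "QF A x = (1/2) * (x \<bullet> (A *v x))"

definition BF :: "real^'n^'n \<Rightarrow> real^'n \<Rightarrow> real^'n \<Rightarrow> real" where
  "BF A x y = x \<bullet> (A *v y)"

text \<open>Q has type (r-1,1): by a real change of basis A becomes diagonal with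
  all diagonal entries nonzero, exactly one of them negative (Sylvester inertia).\<close>
definition lorentzian_type :: "real^'n^'n \<Rightarrow> bool" where
  "lorentzian_type A \<longleftrightarrow> (\<exists>(P::real^'n^'n) (d::'n \<Rightarrow> real). invertible P \<and>
      transpose P ** A ** P = (\<chi> i j. if i = j then d i else 0) \<and>
      (\<forall>i. d i \<noteq> 0) \<and> card {i. d i < 0} = 1)"

definition int_vec :: "real^'n \<Rightarrow> bool" where
  "int_vec c \<longleftrightarrow> (\<forall>i. c $ i \<in> \<int>)"

definition primitive_vec :: "real^'n \<Rightarrow> bool" where
  "primitive_vec c \<longleftrightarrow> int_vec c \<and>
     (\<forall>(m::int) w. int_vec w \<and> c = of_int m *\<^sub>R w \<longrightarrow> \<bar>m\<bar> = 1)"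

definition CQ :: "real^'n^'n \<Rightarrow> real^'n \<Rightarrow> (real^'n) set" where
  "CQ A c0 = {c. QF A c < 0 \<and> BF A c c0 < 0}"

definition SQ :: "real^'n^'n \<Rightarrow> real^'n \<Rightarrow> (real^'n) set" where
  "SQ A c0 = {c. primitive_vec c \<and> QF A c = 0 \<and> BF A c c0 < 0}"

definition CQbar :: "real^'n^'n \<Rightarrow> real^'n \<Rightarrow> (real^'n) set" where
  "CQbar A c0 = CQ A c0 \<union> SQ A c0"

definition OA_plus_R :: "real^'n^'n \<Rightarrow> real^'n \<Rightarrow> (real^'n^'n) set" where
  "OA_plus_R A c0 = {C. invertible C \<and> transpose C ** A ** C = A \<and>
       (\<forall>c\<in>CQ A c0. BF A (C *v c) c < 0)}"

definition OA_plus_Z :: "real^'n^'n \<Rightarrow> real^'n \<Rightarrow> (real^'n^'n) set" where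
  "OA_plus_Z A c0 = {C \<in> OA_plus_R A c0. (\<forall>i j. C $ i $ j \<in> \<int>) \<and>
       (\<forall>i j. matrix_inv C $ i $ j \<in> \<int>)}"

text \<open>R(c); only meaningful for c in the closed cone (empty otherwise).\<close>
definition Rset :: "real^'n^'n \<Rightarrow> real^'n \<Rightarrow> real^'n \<Rightarrow> (real^'n) set" where
  "Rset A c0 c = {a. c \<in> CQ A c0 \<or> (c \<in> SQ A c0 \<and> BF A c a \<notin> \<int>)}"

definition Imv :: "complex^'n \<Rightarrow> real^'n" where
  "Imv z = (\<chi> i. Im (z $ i))"

definition Dset :: "real^'n^'n \<Rightarrow> real^'n \<Rightarrow> real^'n \<Rightarrow> ((complex^'n) \<times> complex) set" where
  "Dset A c0 c = {(z, \<tau>). Im \<tau> > 0 \<and> (1 / Im \<tau>) *\<^sub>R Imv z \<in> Rset A c0 c}"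

definition Efun :: "real \<Rightarrow> real" where
  "Efun x = 2 * (if 0 \<le> x then integral {0..x} (\<lambda>t. exp (- pi * t\<^sup>2))
                 else - integral {x..0} (\<lambda>t. exp (- pi * t\<^sup>2)))"

definition rho :: "real^'n^'n \<Rightarrow> real^'n \<Rightarrow> real^'n \<Rightarrow> real^'n \<Rightarrow> complex \<Rightarrow> real" where
  "rho A c0 c \<nu> \<tau> =
     (if c \<in> CQ A c0 then Efun (BF A c \<nu> / sqrt (- QF A c) * sqrt (Im \<tau>))
      else if c \<in> SQ A c0 then sgn (BF A c \<nu>) else 0)"

definition rho2 :: "real^'n^'n \<Rightarrow> real^'n \<Rightarrow> real^'n \<Rightarrow> real^'n \<Rightarrow> real^'n \<Rightarrow> complex \<Rightarrow> real" where
  "rho2 A c0 c1 c2 \<nu> \<tau> = rho A c0 c1 \<nu> \<tau> - rho A c0 c2 \<nu> \<tau>"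

definition rvec_of_int :: "int^'n \<Rightarrow> real^'n" where
  "rvec_of_int n = (\<chi> i. of_int (n $ i))"

definition BFc :: "real^'n^'n \<Rightarrow> real^'n \<Rightarrow> complex^'n \<Rightarrow> complex" where
  "BFc A x z = (\<Sum>i\<in>UNIV. \<Sum>j\<in>UNIV. complex_of_real (x $ i * A $ i $ j) * z $ j)"

definition cmat_vec :: "real^'n^'n \<Rightarrow> complex^'n \<Rightarrow> complex^'n" where
  "cmat_vec C z = (\<chi> i. \<Sum>j\<in>UNIV. complex_of_real (C $ i $ j) * z $ j)"

definition theta :: "real^'n^'n \<Rightarrow> real^'n \<Rightarrow> real^'n \<Rightarrow> real^'n \<Rightarrow> complex^'n \<Rightarrow> complex \<Rightarrow> complex" where
  "theta A c0 c1 c2 z \<tau> =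
     (let a = (1 / Im \<tau>) *\<^sub>R Imv z in
      infsum (\<lambda>n::int^'n.
         complex_of_real (rho2 A c0 c1 c2 (rvec_of_int n + a) \<tau>) *
         exp (2 * pi * \<i> * complex_of_real (QF A (rvec_of_int n)) * \<tau>
              + 2 * pi * \<i> * BFc A (rvec_of_int n) z)) UNIV)"

end

theory Submission
  imports Defs
begin

text \<open>An isometry C of B maps timelike vectors to timelike vectors, and the condition
  B(Cc, c) < 0 together with the transitivity of "lying in the same time cone" (a reversed
  Cauchy-Schwarz argument, resting on the fact that the B-orthogonal complement of a timelike
  vector is positive definite) shows that C maps the cone C_Q into itself. Null vectors of
  S_Q are limits of vectors of C_Q, so C preserves the sign of B(c, c0) on them, and
  primitivity is preserved because C and C^-1 are integral. Surjectivity follows by applying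
  the same facts to the preimage, which lies in the cone or in its negative. Finally, all
  ingredients of theta are expressed through B and Q, and n \<mapsto> Cn permutes Z^r, so
  reindexing the lattice sum gives the invariance of theta.\<close>

lemma inner_matrix_vector_left: "(C *v x) \<bullet> w = x \<bullet> (transpose C *v (w::real^'n))"
  by (metis dot_lmul_matrix inner_commute transpose_matrix_vector)

lemma BF_sym: "transpose A = A \<Longrightarrow> BF A x y = BF A y x"
  unfolding BF_def by (metis inner_matrix_vector_left inner_commute)

lemma QF_eq_BF: "QF A x = BF A x x / 2"
  unfolding QF_def BF_def by simp

lemma BF_add_left: "BF A (x + y) z = BF A x z + BF A y z"
  unfolding BF_def by (simp add: inner_add_left)

lemma BF_add_right: "BF A z (x + y) = BF A z x + BF A z y"
  unfolding BF_def by (simp add: inner_add_right matrix_vector_right_distrib)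

lemma BF_scaleR_left: "BF A (t *\<^sub>R x) z = t * BF A x z"
  unfolding BF_def by simp

lemma BF_scaleR_right: "BF A z (t *\<^sub>R x) = t * BF A z x"
  unfolding BF_def by (simp add: matrix_vector_mult_scaleR)

lemma BF_minus_left: "BF A (- x) z = - BF A x z"
  unfolding BF_def by simp

lemma BF_diff_right: "BF A z (x - y) = BF A z x - BF A z y"
  unfolding BF_def by (simp add: inner_diff_right matrix_vector_mult_diff_distrib)

lemma BF_minus_right: "BF A z (- x) = - BF A z x"
  using BF_diff_right[of A z 0 x] by (simp add: BF_def)

lemma QF_minus: "QF A (- x) = QF A x"
  by (simp add: QF_eq_BF BF_minus_left BF_minus_right)

lemma QF_lincomb:
  assumes "transpose A = A"
  shows "QF A (a *\<^sub>R y + b *\<^sub>R w) = a\<^sup>2 * QF A y + a * b * BF A y w + b\<^sup>2 * QF A w"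
  using BF_sym[OF assms, of w y]
  by (simp add: QF_eq_BF BF_add_left BF_add_right BF_scaleR_left BF_scaleR_right
      power2_eq_square algebra_simps)

lemma BF_isometry: "transpose C ** A ** C = A \<Longrightarrow> BF A (C *v x) (C *v y) = BF A x y"
  unfolding BF_def by (simp add: inner_matrix_vector_left matrix_vector_mul_assoc matrix_mul_assoc)

lemma QF_isometry: "transpose C ** A ** C = A \<Longrightarrow> QF A (C *v x) = QF A x"
  by (simp add: QF_eq_BF BF_isometry)

lemma QF_change_basis: "QF A (P *v u) = QF (transpose P ** A ** P) u"
  unfolding QF_def by (simp add: inner_matrix_vector_left matrix_vector_mul_assoc matrix_mul_assoc)

lemma matrix_vector_mult_minus_right: "(C::real^'n^'m) *v (- x) = - (C *v x)"
  by (metis matrix_vector_mult_diff_distrib matrix_vector_mult_0_right diff_0)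

lemma QF_diagonal: "QF (\<chi> i j. if i = j then d i else 0) u = (\<Sum>i\<in>UNIV. d i * (u $ i)\<^sup>2) / 2"
proof -
  have "(if i = j then d i else 0) * u $ j = (if i = j then d i * u $ j else 0)" for i j
    by simp
  then have "(\<chi> i j. if i = j then d i else 0) *v u = (\<chi> i. d i * u $ i)"
    by (simp add: matrix_vector_mult_def vec_eq_iff)
  then show ?thesis
    unfolding QF_def by (simp add: inner_vec_def power2_eq_square algebra_simps)
qed

lemma matrix_inv_left_right:
  assumes "invertible (C::real^'n^'n)"
  shows "C ** matrix_inv C = mat 1" "matrix_inv C ** C = mat 1"
  using someI_ex[OF assms[unfolded invertible_def]] unfolding matrix_inv_def by auto

lemma lorentzian_positive_definite_hyperplane:
  fixes A :: "real^'n^'n"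
  assumes "lorentzian_type A"
  shows "\<exists>l :: real^'n \<Rightarrow> real. linear l \<and> (\<forall>v. l v = 0 \<and> v \<noteq> 0 \<longrightarrow> QF A v > 0)"
proof -
  obtain P :: "real^'n^'n" and d where P: "invertible P"
    and diag: "transpose P ** A ** P = (\<chi> i j. if i = j then d i else 0)"
    and d_nonzero: "\<forall>i. d i \<noteq> 0" and card: "card {i. d i < 0} = 1"
    using assms unfolding lorentzian_type_def by blast
  obtain k where k: "{i. d i < 0} = {k}"
    using card card_1_singletonE by blast
  have d_pos: "d i > 0" if "i \<noteq> k" for i
    using k d_nonzero that by (metis (mono_tags) insertI1 linorder_neqE_linordered_idom mem_Collect_eq singletonD)
  define Pi where "Pi = matrix_inv P"
  have P_Pi: "P *v (Pi *v v) = v" for v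
    using matrix_inv_left_right(1)[OF P] by (simp add: Pi_def matrix_vector_mul_assoc)
  have QF_coords: "QF A v = (\<Sum>i\<in>UNIV. d i * ((Pi *v v) $ i)\<^sup>2) / 2" for v
    using QF_change_basis[of A P "Pi *v v"] by (simp add: P_Pi diag QF_diagonal)
  have "linear (\<lambda>v. (Pi *v v) $ k)"
    unfolding linear_iff by (simp add: matrix_vector_right_distrib matrix_vector_mult_scaleR)
  moreover have "QF A v > 0" if vk: "(Pi *v v) $ k = 0" and "v \<noteq> 0" for v
  proof -
    have terms_nonneg: "\<forall>i\<in>UNIV. d i * ((Pi *v v) $ i)\<^sup>2 \<ge> 0"
      using d_pos vk by (metis UNIV_I less_imp_le mult_nonneg_nonneg power_zero_numeral
          zero_le_power2 mult_zero_right)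
    have "Pi *v v \<noteq> 0"
      using P_Pi[of v] \<open>v \<noteq> 0\<close> by auto
    then obtain j where "(Pi *v v) $ j \<noteq> 0"
      by (auto simp: vec_eq_iff)
    then have "d j * ((Pi *v v) $ j)\<^sup>2 \<noteq> 0"
      using d_nonzero by simp
    then have "(\<Sum>i\<in>UNIV. d i * ((Pi *v v) $ i)\<^sup>2) \<noteq> 0"
      using terms_nonneg by (auto simp: sum_nonneg_eq_0_iff)
    moreover have "(\<Sum>i\<in>UNIV. d i * ((Pi *v v) $ i)\<^sup>2) \<ge> 0"
      using terms_nonneg by (simp add: sum_nonneg)
    ultimately show ?thesis
      by (simp add: QF_coords)
  qed
  ultimately show ?thesis
    by blast
qed

lemma lorentzian_orthogonal_timelike_eq_0:
  assumes sym: "transpose A = A" and lor: "lorentzian_type A"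
    and y: "QF A y < 0" and orth: "BF A y w = 0" and w: "QF A w \<le> 0"
  shows "w = 0"
proof -
  obtain l :: "_ \<Rightarrow> real"
    where l: "linear l" and l_pos: "\<And>v. l v = 0 \<Longrightarrow> v \<noteq> 0 \<Longrightarrow> QF A v > 0"
    using lorentzian_positive_definite_hyperplane[OF lor] by blast
  have "y \<noteq> 0"
    using y by (auto simp: QF_def)
  then have ly: "l y \<noteq> 0"
    using l_pos[of y] y by fastforce
  define v where "v = l w *\<^sub>R y + (- l y) *\<^sub>R w"
  have "l v = 0"
    by (simp add: v_def linear_diff[OF l] linear_scale[OF l])
  have QF_v: "QF A v = (l w)\<^sup>2 * QF A y + (l y)\<^sup>2 * QF A w"
    unfolding v_def QF_lincomb[OF sym] orth by simp
  have "(l w)\<^sup>2 * QF A y \<le> 0" "(l y)\<^sup>2 * QF A w \<le> 0"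
    using y w by (simp_all add: mult_nonneg_nonpos)
  then have "QF A v \<le> 0"
    using QF_v by linarith
  then have "v = 0"
    using l_pos[OF \<open>l v = 0\<close>] by fastforce
  then have "QF A v = 0"
    by (simp add: QF_def)
  then have "(l w)\<^sup>2 * QF A y = 0"
    using QF_v \<open>(l w)\<^sup>2 * QF A y \<le> 0\<close> \<open>(l y)\<^sup>2 * QF A w \<le> 0\<close> by linarith
  then have "l w = 0"
    using y by simp
  then show "w = 0"
    using \<open>v = 0\<close> ly by (simp add: v_def)
qed

lemma lorentzian_BF_timelike_nonzero:
  assumes "transpose A = A" "lorentzian_type A" "QF A y < 0" "QF A w \<le> 0" "w \<noteq> 0"
  shows "BF A w y \<noteq> 0"
  using lorentzian_orthogonal_timelike_eq_0[OF assms(1-3), of w] assms(4,5) BF_sym[OF assms(1), of w y]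
  by auto

lemma lorentzian_time_cone_trans:
  assumes sym: "transpose A = A" and lor: "lorentzian_type A"
    and "QF A x < 0" "QF A y < 0" "QF A z < 0" "BF A x y < 0" "BF A z y < 0"
  shows "BF A x z < 0"
proof -
  define l where "l = BF A z y / BF A x y"
  have l: "l > 0"
    using assms(6,7) by (simp add: l_def divide_neg_neg)
  define v where "v = 1 *\<^sub>R z + (- l) *\<^sub>R x"
  have "BF A y v = 0"
    using assms(6) BF_sym[OF sym, of x y] BF_sym[OF sym, of z y]
    by (simp add: v_def BF_add_right BF_diff_right BF_scaleR_right l_def)
  then have "QF A v \<ge> 0"
    using lorentzian_orthogonal_timelike_eq_0[OF sym lor assms(4), of v] by (force simp: QF_def)
  moreover have "QF A v = QF A z - l * BF A z x + l\<^sup>2 * QF A x"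
    unfolding v_def QF_lincomb[OF sym] by (simp add: power2_eq_square)
  ultimately have "l * BF A z x < 0"
    using assms(3,5) l by (smt (verit) mult_pos_neg zero_less_power)
  then have "BF A z x < 0"
    using l by (simp add: mult_less_0_iff)
  then show ?thesis
    using BF_sym[OF sym, of x z] by simp
qed

lemma int_vec_matrix_vector_mult:
  assumes "\<forall>i j. M $ i $ j \<in> \<int>" "int_vec x"
  shows "int_vec (M *v x)"
  using assms unfolding int_vec_def matrix_vector_mult_def by (auto intro!: Ints_sum Ints_mult)

lemma primitive_vec_nonzero: "primitive_vec c \<Longrightarrow> c \<noteq> 0"
proof
  assume "primitive_vec c" and c: "c = 0"
  then have "\<forall>(m::int) w. int_vec w \<and> c = of_int m *\<^sub>R w \<longrightarrow> \<bar>m\<bar> = 1"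
    unfolding primitive_vec_def by blast
  moreover have "int_vec (0::real^'n) \<and> c = of_int (2::int) *\<^sub>R 0"
    using c by (simp add: int_vec_def)
  ultimately have "\<bar>2::int\<bar> = 1"
    by blast
  then show False
    by simp
qed

lemma primitive_vec_minus: "primitive_vec c \<Longrightarrow> primitive_vec (- c)"
  unfolding primitive_vec_def
proof (intro conjI allI impI)
  assume c: "int_vec c \<and> (\<forall>(m::int) w. int_vec w \<and> c = of_int m *\<^sub>R w \<longrightarrow> \<bar>m\<bar> = 1)"
  then show "int_vec (- c)"
    by (simp add: int_vec_def)
  fix m :: int and w
  assume w: "int_vec w \<and> - c = of_int m *\<^sub>R w"
  then have "c = - (of_int m *\<^sub>R w)"
    by (metis minus_minus)
  then have "c = of_int (- m) *\<^sub>R w"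
    by simp
  then show "\<bar>m\<bar> = 1"
    using c w by (metis abs_minus_cancel)
qed

lemma primitive_vec_unimodular:
  assumes M: "\<forall>i j. M $ i $ j \<in> \<int>" and N: "\<forall>i j. N $ i $ j \<in> \<int>"
    and NM: "\<And>x. N *v (M *v x) = x" and p: "primitive_vec c"
  shows "primitive_vec (M *v c)"
  unfolding primitive_vec_def
proof (intro conjI allI impI)
  show "int_vec (M *v c)"
    using int_vec_matrix_vector_mult[OF M] p primitive_vec_def by blast
  fix m :: int and w
  assume h: "int_vec w \<and> M *v c = of_int m *\<^sub>R w"
  then have "c = of_int m *\<^sub>R (N *v w)"
    using NM[of c] by (simp add: matrix_vector_mult_scaleR)
  moreover have "int_vec (N *v w)"
    using int_vec_matrix_vector_mult[OF N] h by blast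
  ultimately show "\<bar>m\<bar> = 1"
    using p unfolding primitive_vec_def by blast
qed

lemma nonpos_if_add_pos_multiple_neg:
  fixes a b :: real
  assumes "\<And>e. e > 0 \<Longrightarrow> a + e * b < 0"
  shows "a \<le> 0"
proof (rule ccontr)
  assume "\<not> a \<le> 0"
  define e where "e = a / (2 * \<bar>b\<bar> + 1)"
  have e: "e > 0"
    using \<open>\<not> a \<le> 0\<close> by (simp add: e_def)
  have "e * \<bar>b\<bar> = a * (\<bar>b\<bar> / (2 * \<bar>b\<bar> + 1))"
    by (simp add: e_def)
  also have "\<dots> < a * 1"
    using \<open>\<not> a \<le> 0\<close> by (intro mult_strict_left_mono) auto
  finally have "e * \<bar>b\<bar> < a"
    by simp
  moreover have "e * (- \<bar>b\<bar>) \<le> e * b"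
    using e by (intro mult_left_mono) auto
  ultimately show False
    using assms[OF e] by simp
qed

lemma image_eq_if_maps_into_split_preimage:
  fixes C Ci :: "real^'n^'n"
  assumes into: "\<And>x. x \<in> S \<Longrightarrow> C *v x \<in> S"
    and not_minus: "\<And>x. x \<in> S \<Longrightarrow> - x \<notin> S"
    and preimage: "\<And>y. y \<in> S \<Longrightarrow> Ci *v y \<in> S \<or> - (Ci *v y) \<in> S"
    and inverse: "\<And>y. C *v (Ci *v y) = y"
  shows "(\<lambda>c. C *v c) ` S = S"
proof (intro subset_antisym subsetI)
  fix y assume y: "y \<in> S"
  have "- (Ci *v y) \<notin> S"
    using into[of "- (Ci *v y)"] not_minus[OF y] inverse[of y]
    by (auto simp: matrix_vector_mult_minus_right)
  then have "Ci *v y \<in> S"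
    using preimage[OF y] by blast
  then show "y \<in> (\<lambda>c. C *v c) ` S"
    using inverse[of y] by force
qed (use into in auto)

lemma OA_plus_Z_isometry: "C \<in> OA_plus_Z A c0 \<Longrightarrow> transpose C ** A ** C = A"
  unfolding OA_plus_Z_def OA_plus_R_def by blast

lemma OA_plus_Z_orthochronous: "C \<in> OA_plus_Z A c0 \<Longrightarrow> c \<in> CQ A c0 \<Longrightarrow> BF A (C *v c) c < 0"
  unfolding OA_plus_Z_def OA_plus_R_def by blast

lemma OA_plus_Z_integral:
  assumes "C \<in> OA_plus_Z A c0"
  shows "\<forall>i j. C $ i $ j \<in> \<int>" "\<forall>i j. matrix_inv C $ i $ j \<in> \<int>"
  using assms unfolding OA_plus_Z_def by blast+

lemma OA_plus_Z_matrix_inv: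
  assumes "C \<in> OA_plus_Z A c0"
  shows "C *v (matrix_inv C *v x) = x" "matrix_inv C *v (C *v x) = x"
  using matrix_inv_left_right[of C] assms
  by (auto simp: OA_plus_Z_def OA_plus_R_def matrix_vector_mul_assoc)

definition Rev :: "complex^'n \<Rightarrow> real^'n" where
  "Rev z = (\<chi> i. Re (z $ i))"

lemma Rev_cmat_vec: "Rev (cmat_vec C z) = C *v Rev z"
  by (simp add: Rev_def cmat_vec_def matrix_vector_mult_def vec_eq_iff Re_sum)

lemma Imv_cmat_vec: "Imv (cmat_vec C z) = C *v Imv z"
  by (simp add: Imv_def cmat_vec_def matrix_vector_mult_def vec_eq_iff Im_sum)

lemma Re_BFc: "Re (BFc A x z) = BF A x (Rev z)"
  by (simp add: BFc_def BF_def Rev_def inner_vec_def matrix_vector_mult_def Re_sum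
      sum_distrib_left mult.assoc)

lemma Im_BFc: "Im (BFc A x z) = BF A x (Imv z)"
  by (simp add: BFc_def BF_def Imv_def inner_vec_def matrix_vector_mult_def Im_sum
      sum_distrib_left mult.assoc)

lemma BFc_isometry: "transpose C ** A ** C = A \<Longrightarrow> BFc A (C *v x) (cmat_vec C z) = BFc A x z"
  by (rule complex_eqI) (simp_all add: Re_BFc Im_BFc Rev_cmat_vec Imv_cmat_vec BF_isometry)

lemma rvec_of_int_inject: "rvec_of_int m = rvec_of_int k \<longleftrightarrow> m = k"
  by (simp add: rvec_of_int_def vec_eq_iff)

lemma int_vec_rvec_of_int: "int_vec x \<longleftrightarrow> (\<exists>m. x = rvec_of_int m)"
proof
  assume "int_vec x"
  then have "x = rvec_of_int (\<chi> i. \<lfloor>x $ i\<rfloor>)"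
    by (auto simp: int_vec_def rvec_of_int_def vec_eq_iff elim!: Ints_cases)
  then show "\<exists>m. x = rvec_of_int m" ..
qed (auto simp: int_vec_def rvec_of_int_def)

lemma bij_lattice_unimodular:
  fixes M N :: "real^'n^'n"
  assumes M: "\<forall>i j. M $ i $ j \<in> \<int>" and N: "\<forall>i j. N $ i $ j \<in> \<int>"
    and NM: "\<And>x. N *v (M *v x) = x" and MN: "\<And>x. M *v (N *v x) = x"
  obtains g :: "int^'n \<Rightarrow> int^'n" where "bij g" "\<And>m. rvec_of_int (g m) = M *v rvec_of_int m"
proof -
  have lift: "\<exists>k. rvec_of_int k = P *v rvec_of_int m" if "\<forall>i j. P $ i $ j \<in> \<int>" for P :: "real^'n^'n" and m
    using int_vec_matrix_vector_mult[OF that, of "rvec_of_int m"] int_vec_rvec_of_int by metis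
  obtain g where g: "\<And>m. rvec_of_int (g m) = M *v rvec_of_int m"
    using lift[OF M] by metis
  obtain h where h: "\<And>m. rvec_of_int (h m) = N *v rvec_of_int m"
    using lift[OF N] by metis
  have "h (g m) = m" "g (h m) = m" for m
    by (simp_all flip: rvec_of_int_inject add: g h NM MN)
  then have "bij g"
    by (intro bij_betw_byWitness[where f' = h]) auto
  with g show thesis
    using that by blast
qed

context
  fixes A :: "real^'n^'n" and c0 :: "real^'n"
  assumes sym: "transpose A = A" and lor: "lorentzian_type A" and c0: "QF A c0 < 0"
begin

lemma OA_plus_Z_maps_CQ:
  assumes C: "C \<in> OA_plus_Z A c0" and c: "c \<in> CQ A c0"
  shows "C *v c \<in> CQ A c0"
proof -
  have Cc: "QF A (C *v c) < 0"
    using c QF_isometry[OF OA_plus_Z_isometry[OF C]] by (simp add: CQ_def)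
  have "BF A (C *v c) c0 < 0"
    using lorentzian_time_cone_trans[OF sym lor Cc _ c0] c OA_plus_Z_orthochronous[OF C c]
      BF_sym[OF sym, of c0 c] by (auto simp: CQ_def)
  with Cc show ?thesis
    by (simp add: CQ_def)
qed

lemma OA_plus_Z_maps_SQ:
  assumes C: "C \<in> OA_plus_Z A c0" and c: "c \<in> SQ A c0"
  shows "C *v c \<in> SQ A c0"
proof -
  note isometry = OA_plus_Z_isometry[OF C]
  have prim: "primitive_vec (C *v c)"
    using primitive_vec_unimodular[OF OA_plus_Z_integral[OF C] OA_plus_Z_matrix_inv(2)[OF C]] c
    by (simp add: SQ_def)
  have null: "QF A (C *v c) = 0"
    using c QF_isometry[OF isometry] by (simp add: SQ_def)
  \<comment> \<open>c is a limit of the vectors c + e c0 of the open cone\<close>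
  have "BF A (C *v c) c0 + e * BF A (C *v c0) c0 < 0" if e: "e > 0" for e
  proof -
    have "QF A (c + e *\<^sub>R c0) = e * BF A c c0 + e\<^sup>2 * QF A c0"
      using QF_lincomb[OF sym, of 1 c e c0] c by (simp add: SQ_def)
    moreover have "BF A (c + e *\<^sub>R c0) c0 = BF A c c0 + e * (2 * QF A c0)"
      by (simp add: BF_add_left BF_scaleR_left QF_eq_BF)
    ultimately have "c + e *\<^sub>R c0 \<in> CQ A c0"
      using c e c0 by (simp add: CQ_def SQ_def mult_pos_neg add_neg_neg)
    from OA_plus_Z_maps_CQ[OF C this] show ?thesis
      by (simp add: CQ_def matrix_vector_right_distrib matrix_vector_mult_scaleR
          BF_add_left BF_scaleR_left)
  qed
  then have "BF A (C *v c) c0 \<le> 0"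
    by (rule nonpos_if_add_pos_multiple_neg)
  moreover have "BF A (C *v c) c0 \<noteq> 0"
    using lorentzian_BF_timelike_nonzero[OF sym lor c0] null prim primitive_vec_nonzero by force
  ultimately show ?thesis
    using prim null by (simp add: SQ_def)
qed

lemma OA_plus_Z_image_CQ:
  assumes C: "C \<in> OA_plus_Z A c0"
  shows "(\<lambda>c. C *v c) ` CQ A c0 = CQ A c0"
proof (rule image_eq_if_maps_into_split_preimage[OF OA_plus_Z_maps_CQ[OF C] _ _
      OA_plus_Z_matrix_inv(1)[OF C]])
  show "- x \<notin> CQ A c0" if "x \<in> CQ A c0" for x
    using that by (simp add: CQ_def BF_minus_left)
  fix y assume y: "y \<in> CQ A c0"
  define d where "d = matrix_inv C *v y"
  have "QF A d = QF A y"
    using QF_isometry[OF OA_plus_Z_isometry[OF C], of d] OA_plus_Z_matrix_inv(1)[OF C]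
    by (simp add: d_def)
  then have d: "QF A d < 0"
    using y by (simp add: CQ_def)
  moreover have "d \<noteq> 0"
    using d by (auto simp: QF_def)
  ultimately have "BF A d c0 \<noteq> 0"
    using lorentzian_BF_timelike_nonzero[OF sym lor c0, of d] by simp
  then show "d \<in> CQ A c0 \<or> - d \<in> CQ A c0"
    using d QF_minus[of A d] BF_minus_left[of A d c0] by (simp add: CQ_def) linarith
qed

lemma OA_plus_Z_image_SQ:
  assumes C: "C \<in> OA_plus_Z A c0"
  shows "(\<lambda>c. C *v c) ` SQ A c0 = SQ A c0"
proof (rule image_eq_if_maps_into_split_preimage[OF OA_plus_Z_maps_SQ[OF C] _ _
      OA_plus_Z_matrix_inv(1)[OF C]])
  show "- x \<notin> SQ A c0" if "x \<in> SQ A c0" for x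
    using that by (simp add: SQ_def BF_minus_left)
  fix y assume y: "y \<in> SQ A c0"
  define d where "d = matrix_inv C *v y"
  have "QF A d = QF A y"
    using QF_isometry[OF OA_plus_Z_isometry[OF C], of d] OA_plus_Z_matrix_inv(1)[OF C]
    by (simp add: d_def)
  then have null: "QF A d = 0"
    using y by (simp add: SQ_def)
  have prim: "primitive_vec d"
    using primitive_vec_unimodular[OF OA_plus_Z_integral(2,1)[OF C] OA_plus_Z_matrix_inv(1)[OF C]] y
    by (simp add: SQ_def d_def)
  then have "BF A d c0 \<noteq> 0"
    using lorentzian_BF_timelike_nonzero[OF sym lor c0, of d] null primitive_vec_nonzero by force
  then show "d \<in> SQ A c0 \<or> - d \<in> SQ A c0"
    using null prim primitive_vec_minus[OF prim] QF_minus[of A d] BF_minus_left[of A d c0]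
    by (simp add: SQ_def) linarith
qed

lemma rho_OA_plus_Z:
  assumes C: "C \<in> OA_plus_Z A c0" and c: "c \<in> CQbar A c0"
  shows "rho A c0 (C *v c) (C *v \<nu>) \<tau> = rho A c0 c \<nu> \<tau>"
proof (cases "c \<in> CQ A c0")
  case True
  then show ?thesis
    using OA_plus_Z_maps_CQ[OF C True] OA_plus_Z_isometry[OF C]
    by (simp add: rho_def QF_isometry BF_isometry)
next
  case False
  then have c: "c \<in> SQ A c0"
    using c by (simp add: CQbar_def)
  then have Cc: "C *v c \<in> SQ A c0"
    by (rule OA_plus_Z_maps_SQ[OF C])
  then have "C *v c \<notin> CQ A c0"
    by (simp add: CQ_def SQ_def)
  then show ?thesis
    using False c Cc OA_plus_Z_isometry[OF C] by (simp add: rho_def BF_isometry)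
qed

lemma Rset_OA_plus_Z:
  assumes C: "C \<in> OA_plus_Z A c0" and "a \<in> Rset A c0 c"
  shows "C *v a \<in> Rset A c0 (C *v c)"
  using assms OA_plus_Z_maps_CQ[OF C, of c] OA_plus_Z_maps_SQ[OF C, of c]
    BF_isometry[OF OA_plus_Z_isometry[OF C]]
  by (auto simp: Rset_def)

lemma Dset_OA_plus_Z:
  assumes C: "C \<in> OA_plus_Z A c0" and "(z, \<tau>) \<in> Dset A c0 c"
  shows "(cmat_vec C z, \<tau>) \<in> Dset A c0 (C *v c)"
  using assms Rset_OA_plus_Z[OF C, of "(1 / Im \<tau>) *\<^sub>R Imv z" c]
  by (simp add: Dset_def Imv_cmat_vec matrix_vector_mult_scaleR)

lemma theta_OA_plus_Z:
  assumes C: "C \<in> OA_plus_Z A c0" and c1: "c1 \<in> CQbar A c0" and c2: "c2 \<in> CQbar A c0"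
  shows "theta A c0 (C *v c1) (C *v c2) (cmat_vec C z) \<tau> = theta A c0 c1 c2 z \<tau>"
proof -
  note isometry = OA_plus_Z_isometry[OF C]
  obtain g where g: "bij g" "\<And>m. rvec_of_int (g m) = C *v rvec_of_int m"
    using bij_lattice_unimodular[OF OA_plus_Z_integral[OF C] OA_plus_Z_matrix_inv(2,1)[OF C]] by blast
  define a where "a = (1 / Im \<tau>) *\<^sub>R Imv z"
  have a: "(1 / Im \<tau>) *\<^sub>R Imv (cmat_vec C z) = C *v a"
    by (simp add: a_def Imv_cmat_vec matrix_vector_mult_scaleR)
  define F where "F n = complex_of_real (rho2 A c0 (C *v c1) (C *v c2) (rvec_of_int n + C *v a) \<tau>) *
    exp (2 * pi * \<i> * complex_of_real (QF A (rvec_of_int n)) * \<tau>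
         + 2 * pi * \<i> * BFc A (rvec_of_int n) (cmat_vec C z))" for n
  define G where "G n = complex_of_real (rho2 A c0 c1 c2 (rvec_of_int n + a) \<tau>) *
    exp (2 * pi * \<i> * complex_of_real (QF A (rvec_of_int n)) * \<tau>
         + 2 * pi * \<i> * BFc A (rvec_of_int n) z)" for n
  have F_g: "F (g m) = G m" for m
  proof -
    have "rvec_of_int (g m) + C *v a = C *v (rvec_of_int m + a)"
      by (simp add: g(2) matrix_vector_right_distrib)
    then show ?thesis
      by (simp add: F_def G_def rho2_def rho_OA_plus_Z[OF C c1] rho_OA_plus_Z[OF C c2] g(2)
          QF_isometry[OF isometry] BFc_isometry[OF isometry])
  qed
  have "theta A c0 (C *v c1) (C *v c2) (cmat_vec C z) \<tau> = infsum F UNIV"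
    unfolding theta_def Let_def a F_def by simp
  also have "\<dots> = infsum (\<lambda>m. F (g m)) UNIV"
    by (rule infsum_reindex_bij_betw[OF g(1), symmetric])
  also have "\<dots> = theta A c0 c1 c2 z \<tau>"
    unfolding F_g theta_def Let_def G_def a_def by simp
  finally show ?thesis .
qed

end

theorem proposition2p13:
  fixes A C :: "real^'n^'n" and c0 c1 c2 :: "real^'n"
    and z :: "complex^'n" and \<tau> :: complex
  assumes "\<forall>i j. A $ i $ j \<in> \<int>"
    and "transpose A = A"
    and "det A \<noteq> 0"
    and "lorentzian_type A"
    and "QF A c0 < 0"
    and "C \<in> OA_plus_Z A c0"
    and "c1 \<in> CQbar A c0" and "c2 \<in> CQbar A c0"
    and "(z, \<tau>) \<in> Dset A c0 c1 \<inter> Dset A c0 c2"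
  shows "(\<lambda>c. C *v c) ` CQ A c0 = CQ A c0 \<and>
         (\<lambda>c. C *v c) ` SQ A c0 = SQ A c0 \<and>
         (cmat_vec C z, \<tau>) \<in> Dset A c0 (C *v c1) \<inter> Dset A c0 (C *v c2) \<and>
         theta A c0 (C *v c1) (C *v c2) (cmat_vec C z) \<tau> = theta A c0 c1 c2 z \<tau>"
  using OA_plus_Z_image_CQ[OF assms(2,4,5,6)] OA_plus_Z_image_SQ[OF assms(2,4,5,6)]
    Dset_OA_plus_Z[OF assms(2,4,5,6)] theta_OA_plus_Z[OF assms(2,4,5,6,7,8)] assms(9)
  by blast

end
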